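(* For $n\in\mathbb N$ let $a(n)=\lfloor n\varphi\rfloor$, $b(n)=\lfloor n\varphi^2\rfloor$, $m(n)=\lfloor\varphi n\rfloor-n+1$, $f(n)=b(n)$, $g(n)=b(n)-1$, $h(n)=2a(n)+n$. Then for every $k\in\mathbb N$: (i) $m(f(a(k)))=b(k)$; (ii) $m(f(b(k)))+1=b(a(k)+1)$; (iii) $m(g(a(k)))+1=b(k)$; (iv) $m(g(b(k)))+2=b(a(k)+1)$; (v) $m(h(a(k)))+3=b(a(k)+1)$; (vi) $m(h(b(k)))+2=b(b(k)+1)$.
   Context: $\mathbb N=\{1,2,\dots\}$, $\varphi=\frac{1+\sqrt5}{2}$ is the golden ratio. *)

theory Defs
  imports Complex_Main
begin

definition phi :: real where "phi = (1 + sqrt 5) / 2"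

definition wa :: "nat \<Rightarrow> nat" where "wa n = nat \<lfloor>real n * phi\<rfloor>"
definition wb :: "nat \<Rightarrow> nat" where "wb n = nat \<lfloor>real n * phi ^ 2\<rfloor>"
definition wm :: "nat \<Rightarrow> nat" where "wm n = nat \<lfloor>phi * real n\<rfloor> - n + 1"
definition wf :: "nat \<Rightarrow> nat" where "wf n = wb n"
definition wg :: "nat \<Rightarrow> nat" where "wg n = wb n - 1"
definition wh :: "nat \<Rightarrow> nat" where "wh n = 2 * wa n + n"

end

theory Submission
  imports Defs "HOL-Computational_Algebra.Primes"
begin

text \<open>
  Write \<open>e = frac (n \<phi>)\<close>, which is positive for \<open>n \<ge> 1\<close> since \<open>\<phi>\<close> is irrational.
  From \<open>\<phi>\<^sup>2 = \<phi> + 1\<close> one gets \<open>a(n) \<phi> = b(n) - (\<phi> - 1) e\<close> and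
  \<open>b(n) \<phi> = a(n) + b(n) + (2 - \<phi>) e\<close>.  Hence \<open>a(a(n)) = b(n) - 1\<close> and \<open>a(b(n)) = a(n) + b(n)\<close>,
  and the fractional part of \<open>a(n) \<phi>\<close> lies above \<open>2 - \<phi>\<close> while that of \<open>b(n) \<phi>\<close> lies
  below it; this decides how \<open>a\<close> jumps next to \<open>a(n)\<close> and \<open>b(n)\<close>.  So \<open>m \<circ> a = id\<close>,
  \<open>m(b(n)) = a(n) + 1\<close>, \<open>m(b(n) - 1) = m(b(n)) - 1\<close>, \<open>h = a \<circ> b\<close>,
  \<open>b(a(n) + 1) = b(a(n)) + 3\<close> and \<open>b(b(n) + 1) = b(b(n)) + 2\<close>, from which all six identities
  follow by linear arithmetic.
\<close>

lemma square_eq_5_times_square_imp_0: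
  fixes m k :: nat
  assumes "m^2 = 5 * k^2"
  shows "k = 0"
  using assms
proof (induction k arbitrary: m rule: less_induct)
  case (less k)
  have "5 dvd m" using less.prems prime_dvd_power[of 5 m 2] by simp
  then obtain m' where m: "m = 5 * m'" by blast
  with less.prems have k_sq: "k^2 = 5 * m'^2" by (simp add: power_mult_distrib)
  then have "5 dvd k" using prime_dvd_power[of 5 k 2] by simp
  then obtain k' where k: "k = 5 * k'" by blast
  with k_sq have "m'^2 = 5 * k'^2" by (simp add: power_mult_distrib)
  show "k = 0"
  proof (rule ccontr)
    assume "k \<noteq> 0"
    with k have "k' < k" by simp
    with less.IH \<open>m'^2 = 5 * k'^2\<close> have "k' = 0" by blast
    with k \<open>k \<noteq> 0\<close> show False by simp
  qed
qed

lemma phi_square: "phi^2 = phi + 1"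
  unfolding phi_def by (simp add: power2_eq_square field_simps)

lemma phi_gt_3_2: "3/2 < phi"
proof -
  have "2 < sqrt 5" by (rule real_less_rsqrt) simp
  then show ?thesis unfolding phi_def by simp
qed

lemma phi_lt_2: "phi < 2"
proof -
  have "sqrt 5 < 3" by (rule real_less_lsqrt) simp_all
  then show ?thesis unfolding phi_def by simp
qed

lemma of_nat_mult_phi_Ints_imp_0:
  assumes "real n * phi \<in> \<int>"
  shows "n = 0"
proof -
  from assms obtain z where "real n * phi = of_int z" by (auto elim: Ints_cases)
  then have root5: "real n * sqrt 5 = of_int (2 * z - int n)" unfolding phi_def by (simp add: field_simps)
  have "(of_int ((2 * z - int n)^2) :: real) = (real n * sqrt 5)^2" by (simp add: root5)
  also have "\<dots> = of_int (int (5 * n^2))" by (simp add: power_mult_distrib)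
  finally have "int (5 * n^2) = (2 * z - int n)^2" by (simp only: of_int_eq_iff)
  moreover have "int ((nat \<bar>2 * z - int n\<bar>)^2) = (2 * z - int n)^2" by simp
  ultimately have "(nat \<bar>2 * z - int n\<bar>)^2 = 5 * n^2" by linarith
  then show "n = 0" by (rule square_eq_5_times_square_imp_0)
qed

lemma frac_mult_phi_pos: "n \<ge> 1 \<Longrightarrow> 0 < frac (real n * phi)"
  using of_nat_mult_phi_Ints_imp_0 frac_ge_0[of "real n * phi"] frac_eq_0_iff[of "real n * phi"]
  by fastforce

lemma of_nat_wa: "real (wa n) = real n * phi - frac (real n * phi)"
  using phi_gt_3_2 unfolding wa_def frac_def by simp

lemma wa_ge: "n \<le> wa n"
proof -
  have "real n * 1 \<le> real n * phi" using phi_gt_3_2 by (intro mult_left_mono) auto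
  then show ?thesis unfolding wa_def by (simp add: le_nat_iff le_floor_iff)
qed

lemma wa_frac_eqI:
  assumes "real n * phi = real c + t" "0 \<le> t" "t < 1"
  shows "wa n = c" "frac (real n * phi) = t"
proof -
  have "\<lfloor>real n * phi\<rfloor> = int c" using assms by (intro floor_unique) auto
  then show "wa n = c" unfolding wa_def by simp
  show "frac (real n * phi) = t" using assms by (simp add: frac_unique_iff)
qed

lemma wb_eq_wa_plus: "wb n = wa n + n"
proof -
  have "real n * phi^2 = real n * phi + of_int (int n)" by (simp add: phi_square algebra_simps)
  then have "\<lfloor>real n * phi^2\<rfloor> = \<lfloor>real n * phi\<rfloor> + int n" by simp
  moreover have "\<lfloor>real n * phi\<rfloor> \<ge> 0" using phi_gt_3_2 by simp
  ultimately show ?thesis unfolding wb_def wa_def by (simp add: nat_add_distrib)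
qed

lemma wm_eq_wa_minus: "wm n = wa n - n + 1"
  unfolding wm_def wa_def by (simp add: mult.commute)

lemma wa_Suc_of_frac_lt:
  assumes "frac (real n * phi) < 2 - phi"
  shows "wa (n + 1) = wa n + 1"
proof (rule wa_frac_eqI)
  show "real (n + 1) * phi = real (wa n + 1) + (frac (real n * phi) + phi - 1)"
    by (simp add: of_nat_wa algebra_simps)
  show "0 \<le> frac (real n * phi) + phi - 1" "frac (real n * phi) + phi - 1 < 1"
    using assms phi_gt_3_2 frac_ge_0[of "real n * phi"] by linarith+
qed

lemma wa_Suc_of_frac_gt:
  assumes "2 - phi < frac (real n * phi)"
  shows "wa (n + 1) = wa n + 2"
proof (rule wa_frac_eqI)
  show "real (n + 1) * phi = real (wa n + 2) + (frac (real n * phi) + phi - 2)"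
    by (simp add: of_nat_wa algebra_simps)
  show "0 \<le> frac (real n * phi) + phi - 2" "frac (real n * phi) + phi - 2 < 1"
    using assms phi_lt_2 frac_lt_1[of "real n * phi"] by linarith+
qed

lemma wa_pred_of_frac_lt:
  assumes "n \<ge> 1" "frac (real n * phi) < phi - 1"
  shows "wa (n - 1) + 2 = wa n"
proof -
  let ?t = "frac (real n * phi) + 2 - phi"
  have shift: "real (n - 1) * phi = real (wa n) - 2 + ?t"
    using assms(1) by (simp add: of_nat_wa of_nat_diff algebra_simps)
  have "0 \<le> ?t" "?t < 1" using assms(2) phi_lt_2 frac_ge_0[of "real n * phi"] by linarith+
  moreover have "0 \<le> real (n - 1) * phi" using phi_gt_3_2 by simp
  ultimately have "1 < real (wa n)" using shift by linarith
  then have "wa n \<ge> 2" by simp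
  have "wa (n - 1) = wa n - 2"
  proof (rule wa_frac_eqI)
    show "real (n - 1) * phi = real (wa n - 2) + ?t" using shift \<open>wa n \<ge> 2\<close> by (simp add: of_nat_diff)
  qed fact+
  with \<open>wa n \<ge> 2\<close> show ?thesis by simp
qed

lemma wa_mult_phi: "real (wa n) * phi = real (wb n) - (phi - 1) * frac (real n * phi)"
proof -
  have "real (wa n) * phi = real n * phi^2 - frac (real n * phi) * phi"
    by (simp add: of_nat_wa power2_eq_square algebra_simps)
  also have "\<dots> = real (wb n) - (phi - 1) * frac (real n * phi)"
    by (simp add: phi_square wb_eq_wa_plus of_nat_wa algebra_simps)
  finally show ?thesis .
qed

lemma wb_mult_phi: "real (wb n) * phi = real (wa n + wb n) + (2 - phi) * frac (real n * phi)"
proof -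
  have "real (wb n) * phi = real (wa n) * phi + real n * phi" by (simp add: wb_eq_wa_plus algebra_simps)
  also have "\<dots> = real (wa n + wb n) + (2 - phi) * frac (real n * phi)"
    unfolding wa_mult_phi using of_nat_wa[of n] by (simp add: algebra_simps)
  finally show ?thesis .
qed

lemma wa_wa: "n \<ge> 1 \<Longrightarrow> wa (wa n) + 1 = wb n"
  and frac_wa_mult_phi_gt: "n \<ge> 1 \<Longrightarrow> 2 - phi < frac (real (wa n) * phi)"
proof -
  assume "n \<ge> 1"
  let ?t = "1 - (phi - 1) * frac (real n * phi)"
  have pos: "0 < frac (real n * phi)" using \<open>n \<ge> 1\<close> by (rule frac_mult_phi_pos)
  have "wb n \<ge> 1" using \<open>n \<ge> 1\<close> by (simp add: wb_eq_wa_plus)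
  then have eq: "real (wa n) * phi = real (wb n - 1) + ?t" by (simp add: wa_mult_phi of_nat_diff)
  have lt1: "frac (real n * phi) < 1" by (rule frac_lt_1)
  have "(phi - 1) * frac (real n * phi) < phi - 1" using lt1 phi_gt_3_2 by simp
  moreover have "0 < (phi - 1) * frac (real n * phi)" using pos phi_gt_3_2 by simp
  ultimately have "0 \<le> ?t" "?t < 1" "2 - phi < ?t" using phi_lt_2 by linarith+
  with eq have "wa (wa n) = wb n - 1" "frac (real (wa n) * phi) = ?t"
    by (blast intro: wa_frac_eqI)+
  with \<open>wb n \<ge> 1\<close> \<open>2 - phi < ?t\<close>
  show "wa (wa n) + 1 = wb n" "2 - phi < frac (real (wa n) * phi)" by simp_all
qed

lemma wa_wb: "wa (wb n) = wa n + wb n"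
  and frac_wb_mult_phi_lt: "frac (real (wb n) * phi) < 2 - phi"
proof -
  let ?t = "(2 - phi) * frac (real n * phi)"
  have "0 \<le> ?t" using phi_lt_2 by simp
  moreover have "?t < 2 - phi" using phi_lt_2 frac_lt_1[of "real n * phi"] by simp
  moreover from this have "?t < 1" using phi_gt_3_2 by linarith
  ultimately have "wa (wb n) = wa n + wb n" "frac (real (wb n) * phi) = ?t"
    using wb_mult_phi by (blast intro: wa_frac_eqI)+
  with \<open>?t < 2 - phi\<close>
  show "wa (wb n) = wa n + wb n" "frac (real (wb n) * phi) < 2 - phi" by simp_all
qed

lemma wm_wa: "n \<ge> 1 \<Longrightarrow> wm (wa n) = n"
  using wa_wa[of n] by (simp add: wm_eq_wa_minus wb_eq_wa_plus)

lemma wm_wb: "wm (wb n) = wa n + 1"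
  by (simp add: wm_eq_wa_minus wa_wb)

lemma wm_pred_wb:
  assumes "n \<ge> 1"
  shows "wm (wb n - 1) + 1 = wm (wb n)"
proof -
  have "wb n \<ge> 1" using assms by (simp add: wb_eq_wa_plus)
  moreover have "frac (real (wb n) * phi) < phi - 1"
    using frac_wb_mult_phi_lt[of n] phi_gt_3_2 by linarith
  ultimately have "wa (wb n - 1) + 2 = wa (wb n)" by (rule wa_pred_of_frac_lt)
  moreover have "wb n - 1 \<le> wa (wb n - 1)" by (rule wa_ge)
  ultimately show ?thesis using \<open>wb n \<ge> 1\<close> by (simp add: wm_eq_wa_minus)
qed

lemma wh_eq_wa_wb: "wh n = wa (wb n)"
  unfolding wh_def wa_wb by (simp add: wb_eq_wa_plus)

lemma wb_Suc_wa: "n \<ge> 1 \<Longrightarrow> wb (wa n + 1) = wb (wa n) + 3"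
  using wa_Suc_of_frac_gt[OF frac_wa_mult_phi_gt] by (simp add: wb_eq_wa_plus)

lemma wb_Suc_wb: "wb (wb n + 1) = wb (wb n) + 2"
  using wa_Suc_of_frac_lt[OF frac_wb_mult_phi_lt] by (simp add: wb_eq_wa_plus)

theorem lemma5p4:
  fixes k :: nat
  assumes "k \<ge> 1"
  shows "wm (wf (wa k)) = wb k \<and>
    wm (wf (wb k)) + 1 = wb (wa k + 1) \<and>
    wm (wg (wa k)) + 1 = wb k \<and>
    wm (wg (wb k)) + 2 = wb (wa k + 1) \<and>
    wm (wh (wa k)) + 3 = wb (wa k + 1) \<and>
    wm (wh (wb k)) + 2 = wb (wb k + 1)"
proof -
  have "wa k \<ge> 1" "wb k \<ge> 1" using assms wa_ge[of k] wb_eq_wa_plus[of k] by simp_all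
  have i: "wm (wb (wa k)) = wb k" using wa_wa[OF assms] by (simp add: wm_wb)
  have ii: "wm (wb (wb k)) + 1 = wb (wa k + 1)"
    using wa_wa[OF assms] wb_Suc_wa[OF assms] by (simp add: wm_wb wa_wb wb_eq_wa_plus[of "wa k"])
  have iii: "wm (wb (wa k) - 1) + 1 = wb k" using i wm_pred_wb[OF \<open>wa k \<ge> 1\<close>] by simp
  have iv: "wm (wb (wb k) - 1) + 2 = wb (wa k + 1)" using ii wm_pred_wb[OF \<open>wb k \<ge> 1\<close>] by simp
  have v: "wm (wh (wa k)) + 3 = wb (wa k + 1)"
    using wb_Suc_wa[OF assms] wm_wa[of "wb (wa k)"] \<open>wa k \<ge> 1\<close> by (simp add: wh_eq_wa_wb wb_eq_wa_plus)
  have vi: "wm (wh (wb k)) + 2 = wb (wb k + 1)"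
    using wb_Suc_wb[of k] wm_wa[of "wb (wb k)"] \<open>wb k \<ge> 1\<close> by (simp add: wh_eq_wa_wb wb_eq_wa_plus)
  show ?thesis using i ii iii iv v vi by (simp add: wf_def wg_def)
qed

end
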